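(* Let $h,k\ge 2$ be integers and $w=a^hb^k$. For $n\ge1$ let $S_n = a^h(a^{2h}b^{2k})(aba^{h-1}b^{k-1})^{n}(a^{2h}b^{2k})b^k$. Then every $S_n$ belongs to $L^{\epsilon}_{\vdash_{\{w\}}}$ and for all $1\le i<j$ we have $S_i \not\vdash^*_{\{w\}} S_j$; in particular $\vdash^*_{\{w\}}$ is not a well quasi-order on $L^{\epsilon}_{\vdash_{\{w\}}}$.
   Context: For words $u,v$, the shuffle $u \sqcup\!\sqcup v$ is the set of all words $u_1v_1\cdots u_kv_k$ with $k\ge 1$, $u=u_1\cdots u_k$, $v=v_1\cdots v_k$ (pieces possibly empty). For a finite set $I$ of words, $v \vdash_I w$ means $w \in v \sqcup\!\sqcup u$ for some $u\in I$; $\vdash_I^*$ is its reflexive-transitive closure and $L^{\epsilon}_{\vdash_I}=\{w : \epsilon \vdash_I^* w\}$. A quasi-order $\le$ on $S$ is a well quasi-order iff every infinite sequence $s_1,s_2,\dots$ in $S$ has $i<j$ with $s_i\le s_j$. *)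

theory Defs
  imports Main
begin

datatype letter = a | b

type_synonym word = "letter list"

definition shuffle :: "'x list \<Rightarrow> 'x list \<Rightarrow> 'x list set" where
  "shuffle u v = {concat (map (\<lambda>(p, q). p @ q) (zip us vs)) | us vs.
      length us = length vs \<and> length us \<ge> 1 \<and> concat us = u \<and> concat vs = v}"

definition ins_step :: "'x list set \<Rightarrow> 'x list \<Rightarrow> 'x list \<Rightarrow> bool" where
  "ins_step I v w \<longleftrightarrow> (\<exists>u\<in>I. w \<in> shuffle v u)"

definition ins_steps :: "'x list set \<Rightarrow> 'x list \<Rightarrow> 'x list \<Rightarrow> bool" where
  "ins_steps I = (ins_step I)\<^sup>*\<^sup>*"

definition L_eps :: "'x list set \<Rightarrow> 'x list set" where
  "L_eps I = {w. ins_steps I [] w}"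

definition wqo_on :: "('x \<Rightarrow> 'x \<Rightarrow> bool) \<Rightarrow> 'x set \<Rightarrow> bool" where
  "wqo_on le S \<longleftrightarrow> (\<forall>s::nat \<Rightarrow> 'x. (\<forall>n. s n \<in> S) \<longrightarrow> (\<exists>i j. i < j \<and> le (s i) (s j)))"

definition S_word :: "nat \<Rightarrow> nat \<Rightarrow> nat \<Rightarrow> word" where
  "S_word h k n = replicate h a @ (replicate (2*h) a @ replicate (2*k) b)
     @ concat (replicate n ([a, b] @ replicate (h-1) a @ replicate (k-1) b))
     @ (replicate (2*h) a @ replicate (2*k) b) @ replicate k b"

end

theory Submission
  imports Defs "HOL-Library.Sublist"
begin

text \<open>
  The words \<open>S\<^sub>n\<close> are derived from \<open>\<epsilon>\<close> by inserting \<open>w\<close> into the middle of the current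
  word, and each motif \<open>a b a\<^sup>h\<^sup>-\<^sup>1 b\<^sup>k\<^sup>-\<^sup>1\<close> arises by shuffling a copy of \<open>w\<close> into a prefix \<open>a\<^sup>h\<close>.

  If \<open>S\<^sub>i \<turnstile>\<^sup>* S\<^sub>j\<close>, then \<open>S\<^sub>j\<close> is a shuffle of \<open>S\<^sub>i\<close> with a word \<open>D\<close> derivable from \<open>\<epsilon>\<close>,
  and every prefix \<open>p\<close> of such a \<open>D\<close> has excess \<open>k|p|\<^sub>a - h|p|\<^sub>b \<ge> 0\<close> and at least \<open>h\<close>
  letters \<open>a\<close> once it contains a \<open>b\<close>. The first \<open>b\<close> of \<open>S\<^sub>i = a\<^sup>3\<^sup>h b \<dots>\<close> lands in \<open>S\<^sub>j\<close> after a
  prefix of excess at least \<open>3hk\<close>; the only such prefixes of \<open>S\<^sub>j\<close> are \<open>a\<^sup>3\<^sup>h\<close> and the one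
  before its final block \<open>b\<^sup>3\<^sup>k\<close>, and the latter leaves too few letters \<open>b\<close>. So the tails
  after the first \<open>b\<close> are shuffles of each other with \<open>D\<close>, and the first \<open>b\<close> of \<open>D\<close>, preceded
  by at least \<open>h\<close> letters \<open>a\<close>, has no place: up to the \<open>(i+1)\<close>-st motif the tails agree and
  contain no run \<open>a\<^sup>h\<close>, and beyond it the \<open>b\<close>s of the tail of \<open>S\<^sub>i\<close> come after its block
  \<open>a\<^sup>2\<^sup>h\<close>, whereas the next \<open>b\<close> of \<open>S\<^sub>j\<close> is preceded by a single new \<open>a\<close>.
\<close>

lemma count_list_replicate [simp]:
  "count_list (replicate n x) y = (if x = y then n else 0)"
  by (induction n) auto

lemma count_list_concat_replicate [simp]:
  "count_list (concat (replicate n xs)) y = n * count_list xs y"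
  by (induction n) auto

lemma length_eq_count_list_a_b: "length w = count_list w a + count_list w b"
proof (induction w)
  case (Cons x w)
  then show ?case by (cases x) auto
qed simp

lemma replicate_a_if_b_notin: "b \<notin> set w \<Longrightarrow> w = replicate (length w) a"
  by (metis (full_types) letter.exhaust replicate_length_same)

lemma count_list_eq_length_imp_replicate:
  "count_list xs x = length xs \<Longrightarrow> xs = replicate (length xs) x"
proof (induction xs)
  case (Cons y xs)
  then show ?case using count_le_length[of xs x] by (auto split: if_splits)
qed simp

lemma prefix_replicate_iff: "prefix ps (replicate n x) \<longleftrightarrow> (\<exists>m\<le>n. ps = replicate m x)"
proof
  assume "prefix ps (replicate n x)"
  then obtain zs where zs: "replicate n x = ps @ zs" by (auto simp: prefix_def)
  then have "set ps \<subseteq> set (replicate n x)" by simp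
  then have "\<forall>y\<in>set ps. y = x" by auto
  then have "ps = replicate (length ps) x" by (simp add: replicate_length_same)
  moreover have "length ps \<le> n" using arg_cong[OF zs, of length] by simp
  ultimately show "\<exists>m\<le>n. ps = replicate m x" by blast
next
  assume "\<exists>m\<le>n. ps = replicate m x"
  then show "prefix ps (replicate n x)"
    by (metis le_add_diff_inverse prefixI replicate_add)
qed

lemma prefix_replicate_append_replicate:
  assumes "prefix ps (replicate m x @ replicate n y)"
  obtains i j where "ps = replicate i x @ replicate j y" "i \<le> m" "j \<le> n" "j = 0 \<or> i = m"
proof -
  from assms consider i where "i \<le> m" "ps = replicate i x"
    | j where "j \<le> n" "ps = replicate m x @ replicate j y"
    unfolding prefix_append prefix_replicate_iff by blast
  then show thesis
  proof cases
    case (1 i)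
    then show thesis using that[of i 0] by simp
  next
    case (2 j)
    then show thesis using that[of m j] by simp
  qed
qed

lemma prefix_by_count_last:
  assumes "prefix xs zs" "prefix ys zs" "xs \<noteq> []" "last xs = c"
    and "count_list xs c \<le> count_list ys c"
  shows "prefix xs ys"
  using prefix_same_cases[OF assms(1,2)]
proof
  assume "prefix ys xs"
  then obtain us where us: "xs = ys @ us" by (auto simp: prefix_def)
  show "prefix xs ys"
  proof (cases "us = []")
    case False
    then have "c \<in> set us" using assms(4) us by (metis last_appendR last_in_set)
    then show ?thesis using assms(5) us count_list_0_iff[of us c] by simp
  qed (use us in simp)
qed

lemma append_Cons_eq_by_count:
  assumes "xs1 @ c # ys1 = xs2 @ c # ys2" "count_list xs1 c = count_list xs2 c"
  shows "xs1 = xs2"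
proof -
  have p1: "prefix (xs1 @ [c]) (xs1 @ c # ys1)" by (simp add: prefix_def)
  have p2: "prefix (xs2 @ [c]) (xs1 @ c # ys1)" by (simp add: assms(1) prefix_def)
  have "prefix (xs1 @ [c]) (xs2 @ [c])"
    by (rule prefix_by_count_last[OF p1 p2]) (use assms(2) in auto)
  moreover have "prefix (xs2 @ [c]) (xs1 @ [c])"
    by (rule prefix_by_count_last[OF p2 p1]) (use assms(2) in auto)
  ultimately have "xs1 @ [c] = xs2 @ [c]" by (rule prefix_order.antisym)
  then show ?thesis by simp
qed

lemma not_sublist_replicate_if_count_less:
  "count_list xs x < n \<Longrightarrow> \<not> sublist (replicate n x) xs"
  by (auto simp: sublist_def)

lemma not_sublist_replicate_append:
  assumes "\<not> sublist (replicate n x) xs" "\<not> sublist (replicate n x) ys" "last xs \<noteq> x"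
  shows "\<not> sublist (replicate n x) (xs @ ys)"
proof
  assume "sublist (replicate n x) (xs @ ys)"
  with assms(1,2) obtain us vs where
    uv: "replicate n x = us @ vs" "suffix us xs" "prefix vs ys"
    unfolding sublist_append by blast
  show False
  proof (cases "us = []")
    case True
    then show False using uv assms(2) by (metis append_Nil prefix_imp_sublist)
  next
    case False
    then have "last us \<in> set (replicate n x)" using last_in_set[of us] by (simp add: uv(1))
    then have "last us = x" by simp
    moreover have "last xs = last us" using False uv(2) by (auto simp: suffix_def)
    ultimately show False using assms(3) by simp
  qed
qed

section \<open>Shuffles\<close>

lemma append_in_shuffles_leftI: "zs \<in> shuffles xs ys \<Longrightarrow> ps @ zs \<in> shuffles (ps @ xs) ys"
  by (induction ps) (auto intro: Cons_in_shuffles_leftI)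

lemma append_in_shuffles_rightI: "zs \<in> shuffles xs ys \<Longrightarrow> ps @ zs \<in> shuffles xs (ps @ ys)"
  by (induction ps) (auto intro: Cons_in_shuffles_rightI)

lemma concat_zip_in_shuffles:
  "length us = length vs \<Longrightarrow>
   concat (map (\<lambda>(p, q). p @ q) (zip us vs)) \<in> shuffles (concat us) (concat vs)"
proof (induction us arbitrary: vs)
  case (Cons u us)
  then obtain v vs' where "vs = v # vs'" by (cases vs) auto
  with Cons show ?case
    by (auto intro: append_in_shuffles_leftI append_in_shuffles_rightI)
qed simp

lemma Cons_in_shuffle_leftI: "zs \<in> shuffle xs ys \<Longrightarrow> x # zs \<in> shuffle (x # xs) ys"
proof -
  assume "zs \<in> shuffle xs ys"
  then obtain us vs where uv: "zs = concat (map (\<lambda>(p, q). p @ q) (zip us vs))"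
    "length us = length vs" "1 \<le> length us" "concat us = xs" "concat vs = ys"
    unfolding shuffle_def by blast
  then obtain u us' v vs' where "us = u # us'" "vs = v # vs'"
    by (cases us; cases vs) auto
  with uv show ?thesis
    unfolding shuffle_def by (intro CollectI exI[of _ "(x # u) # us'"] exI[of _ vs]) auto
qed

lemma Cons_in_shuffle_rightI: "zs \<in> shuffle xs ys \<Longrightarrow> y # zs \<in> shuffle xs (y # ys)"
proof -
  assume "zs \<in> shuffle xs ys"
  then obtain us vs where uv: "zs = concat (map (\<lambda>(p, q). p @ q) (zip us vs))"
    "length us = length vs" "1 \<le> length us" "concat us = xs" "concat vs = ys"
    unfolding shuffle_def by blast
  then show ?thesis
    unfolding shuffle_def by (intro CollectI exI[of _ "[] # us"] exI[of _ "[y] # vs"]) auto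
qed

lemma shuffle_eq_shuffles: "shuffle xs ys = shuffles xs ys"
proof
  show "shuffle xs ys \<subseteq> shuffles xs ys"
    unfolding shuffle_def using concat_zip_in_shuffles by blast
  have left: "xs' \<in> shuffle xs' []" for xs' :: "'a list"
    unfolding shuffle_def by (intro CollectI exI[of _ "[xs']"] exI[of _ "[[]]"]) simp
  have right: "ys' \<in> shuffle [] ys'" for ys' :: "'a list"
    unfolding shuffle_def by (intro CollectI exI[of _ "[[]]"] exI[of _ "[ys']"]) simp
  show "shuffles xs ys \<subseteq> shuffle xs ys"
    by (induction xs ys rule: shuffles.induct)
      (auto intro: Cons_in_shuffle_leftI Cons_in_shuffle_rightI left right)
qed

lemma count_list_shuffles:
  "zs \<in> shuffles xs ys \<Longrightarrow> count_list zs c = count_list xs c + count_list ys c"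
  by (induction xs ys arbitrary: zs rule: shuffles.induct) auto

lemma prefix_in_shuffles:
  assumes "zs \<in> shuffles xs ys" "prefix ps zs"
  obtains xs' ys' where "prefix xs' xs" "prefix ys' ys" "ps \<in> shuffles xs' ys'"
  using assms
proof (induction ps arbitrary: zs xs ys thesis)
  case Nil
  then show ?case by fastforce
next
  case (Cons p ps)
  from Cons.prems(3) obtain zs' where zs: "zs = p # zs'" "prefix ps zs'"
    by (auto simp: prefix_def)
  then have "p # zs' \<in> shuffles xs ys" using Cons.prems(2) by simp
  then consider xs'' where "xs = p # xs''" "zs' \<in> shuffles xs'' ys"
    | ys'' where "ys = p # ys''" "zs' \<in> shuffles xs ys''"
    unfolding Cons_in_shuffles_iff by (cases xs; cases ys) auto
  then show ?case
  proof cases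
    case (1 xs'')
    then obtain xs' ys' where "prefix xs' xs''" "prefix ys' ys" "ps \<in> shuffles xs' ys'"
      using Cons.IH zs(2) by blast
    then show ?thesis
      using Cons.prems(1)[of "p # xs'" ys'] 1 by (auto intro: Cons_in_shuffles_leftI)
  next
    case (2 ys'')
    then obtain xs' ys' where "prefix xs' xs" "prefix ys' ys''" "ps \<in> shuffles xs' ys'"
      using Cons.IH zs(2) by blast
    then show ?thesis
      using Cons.prems(1)[of xs' "p # ys'"] 2 by (auto intro: Cons_in_shuffles_rightI)
  qed
qed

lemma shuffles_assoc:
  assumes "zs \<in> shuffles us ws" "us \<in> shuffles xs ys"
  obtains vs where "zs \<in> shuffles xs vs" "vs \<in> shuffles ys ws"
  using assms
proof (induction zs arbitrary: us ws xs ys thesis)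
  case Nil
  then have "xs = []" "ys = []" "ws = []" by simp_all
  then show ?case using Nil.prems(1)[of "[]"] by simp
next
  case (Cons z zs)
  consider us' where "us = z # us'" "zs \<in> shuffles us' ws"
    | ws' where "ws = z # ws'" "zs \<in> shuffles us ws'"
    using Cons.prems(2) unfolding Cons_in_shuffles_iff by (cases us; cases ws) auto
  then show ?case
  proof cases
    case (1 us')
    then consider xs' where "xs = z # xs'" "us' \<in> shuffles xs' ys"
      | ys' where "ys = z # ys'" "us' \<in> shuffles xs ys'"
      using Cons.prems(3) unfolding 1 Cons_in_shuffles_iff by (cases xs; cases ys) auto
    then show ?thesis
    proof cases
      case (1 xs')
      with \<open>zs \<in> shuffles us' ws\<close> obtain vs where "zs \<in> shuffles xs' vs" "vs \<in> shuffles ys ws"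
        using Cons.IH by blast
      then show ?thesis using Cons.prems(1) 1 by (auto intro: Cons_in_shuffles_leftI)
    next
      case (2 ys')
      with \<open>zs \<in> shuffles us' ws\<close> obtain vs where "zs \<in> shuffles xs vs" "vs \<in> shuffles ys' ws"
        using Cons.IH by blast
      then show ?thesis using Cons.prems(1)[of "z # vs"] 2
        by (auto intro: Cons_in_shuffles_leftI Cons_in_shuffles_rightI)
    qed
  next
    case (2 ws')
    then obtain vs where "zs \<in> shuffles xs vs" "vs \<in> shuffles ys ws'"
      using Cons.IH Cons.prems(3) by blast
    then show ?thesis using Cons.prems(1)[of "z # vs"] 2 by (auto intro: Cons_in_shuffles_rightI)
  qed
qed

lemma shuffles_split_left:
  assumes "zs \<in> shuffles (xs1 @ c # xs2) ys"
  obtains zs1 zs2 ys1 ys2 where "zs = zs1 @ c # zs2" "ys = ys1 @ ys2"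
    "zs1 \<in> shuffles xs1 ys1" "zs2 \<in> shuffles xs2 ys2"
  using assms
proof (induction zs arbitrary: xs1 ys thesis)
  case Nil
  then show ?case by simp
next
  case (Cons z zs)
  consider "xs1 = []" "z = c" "zs \<in> shuffles xs2 ys"
    | xs1' where "xs1 = z # xs1'" "zs \<in> shuffles (xs1' @ c # xs2) ys"
    | ys' where "ys = z # ys'" "zs \<in> shuffles (xs1 @ c # xs2) ys'"
    using Cons.prems(2) unfolding Cons_in_shuffles_iff by (cases xs1; cases ys) auto
  then show ?case
  proof cases
    case 1
    then show ?thesis using Cons.prems(1)[of "[]" zs "[]" ys] by simp
  next
    case (2 xs1')
    then obtain zs1 zs2 ys1 ys2 where "zs = zs1 @ c # zs2" "ys = ys1 @ ys2"
      "zs1 \<in> shuffles xs1' ys1" "zs2 \<in> shuffles xs2 ys2"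
      using Cons.IH by metis
    then show ?thesis using Cons.prems(1)[of "z # zs1"] 2 by (auto intro: Cons_in_shuffles_leftI)
  next
    case (3 ys')
    then obtain zs1 zs2 ys1 ys2 where "zs = zs1 @ c # zs2" "ys' = ys1 @ ys2"
      "zs1 \<in> shuffles xs1 ys1" "zs2 \<in> shuffles xs2 ys2"
      using Cons.IH by metis
    then show ?thesis
      using Cons.prems(1)[of "z # zs1" zs2 "z # ys1"] 3 by (auto intro: Cons_in_shuffles_rightI)
  qed
qed

lemma shuffles_split_right:
  assumes "zs \<in> shuffles xs (ys1 @ c # ys2)"
  obtains zs1 zs2 xs1 xs2 where "zs = zs1 @ c # zs2" "xs = xs1 @ xs2"
    "zs1 \<in> shuffles xs1 ys1" "zs2 \<in> shuffles xs2 ys2"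
  using assms shuffles_split_left[of zs ys1 c ys2 xs] by (metis shuffles_commutes)

lemma shuffles_replicate_common_prefix:
  assumes "zs \<in> shuffles xs (replicate d x)" "prefix zs vs" "prefix xs vs"
  shows "zs = xs @ replicate d x"
proof -
  have "length xs \<le> length zs" using length_shuffles[OF assms(1)] by simp
  then obtain us where us: "zs = xs @ us"
    using prefix_length_prefix[OF assms(3,2)] by (auto simp: prefix_def)
  then have "length us = d" "count_list us x = d"
    using length_shuffles[OF assms(1)] count_list_shuffles[OF assms(1), of x] by simp_all
  then show ?thesis using us count_list_eq_length_imp_replicate[of us x] by simp
qed

lemma shuffles_split_left_count:
  assumes "zs \<in> shuffles (xs1 @ c # xs2) ys" "c \<notin> set ys"
  obtains zs1 zs2 where "zs = zs1 @ c # zs2" "count_list zs1 c = count_list xs1 c"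
    "\<And>y. count_list xs1 y \<le> count_list zs1 y"
proof -
  from assms(1) obtain zs1 zs2 ys1 ys2 where "zs = zs1 @ c # zs2" "ys = ys1 @ ys2"
    and zs1: "zs1 \<in> shuffles xs1 ys1"
    by (rule shuffles_split_left)
  moreover have "count_list ys1 c = 0" using assms(2) \<open>ys = ys1 @ ys2\<close> by simp
  ultimately show thesis using that count_list_shuffles[OF zs1] by simp
qed

section \<open>Insertion derivations\<close>

lemma ins_step_iff_shuffles: "ins_step I xs zs \<longleftrightarrow> (\<exists>u\<in>I. zs \<in> shuffles xs u)"
  by (simp add: ins_step_def shuffle_eq_shuffles)

lemma ins_steps_trans [trans]: "ins_steps I xs ys \<Longrightarrow> ins_steps I ys zs \<Longrightarrow> ins_steps I xs zs"
  unfolding ins_steps_def by (rule rtranclp_trans)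

lemma ins_steps_insert:
  assumes "u \<in> I"
  shows "ins_steps I (xs @ ys) (xs @ u @ ys)"
proof -
  have "xs @ u @ ys \<in> shuffles (xs @ ys) (u @ [])"
    by (intro append_in_shuffles_leftI append_in_shuffles_rightI) simp
  then show ?thesis
    using assms unfolding ins_steps_def ins_step_iff_shuffles by auto
qed

lemma ins_steps_imp_shuffles_L_eps:
  assumes "ins_steps I ys zs"
  obtains ds where "zs \<in> shuffles ys ds" "ds \<in> L_eps I"
proof -
  from assms have "\<exists>ds. zs \<in> shuffles ys ds \<and> ds \<in> L_eps I"
    unfolding ins_steps_def
  proof (induction rule: rtranclp_induct)
    case base
    show ?case by (intro exI[of _ "[]"]) (simp add: L_eps_def ins_steps_def)
  next
    case (step zs zs')
    then obtain ds u where ds: "zs \<in> shuffles ys ds" "ds \<in> L_eps I"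
      and u: "u \<in> I" "zs' \<in> shuffles zs u"
      by (auto simp: ins_step_iff_shuffles)
    obtain ds' where "zs' \<in> shuffles ys ds'" "ds' \<in> shuffles ds u"
      using shuffles_assoc[OF u(2) ds(1)] .
    moreover have "ins_step I ds ds'"
      using u(1) \<open>ds' \<in> shuffles ds u\<close> by (auto simp: ins_step_iff_shuffles)
    then have "ds' \<in> L_eps I"
      using ds(2) by (auto simp: L_eps_def ins_steps_def)
    ultimately show ?case by blast
  qed
  then show thesis using that by blast
qed

section \<open>Words derivable from the empty word\<close>

definition excess :: "nat \<Rightarrow> nat \<Rightarrow> word \<Rightarrow> int" where
  "excess h k w = int k * int (count_list w a) - int h * int (count_list w b)"

lemma excess_Nil [simp]: "excess h k [] = 0"
  by (simp add: excess_def)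

lemma excess_append [simp]: "excess h k (xs @ ys) = excess h k xs + excess h k ys"
  by (simp add: excess_def algebra_simps)

lemma excess_replicate [simp]:
  "excess h k (replicate n a) = int k * int n"
  "excess h k (replicate n b) = - (int h * int n)"
  by (simp_all add: excess_def)

definition balanced :: "nat \<Rightarrow> nat \<Rightarrow> word \<Rightarrow> bool" where
  "balanced h k ds \<longleftrightarrow>
     (\<forall>ps. prefix ps ds \<longrightarrow> 0 \<le> excess h k ps \<and> (b \<in> set ps \<longrightarrow> h \<le> count_list ps a))"

lemma balancedD:
  assumes "balanced h k ds" "prefix ps ds"
  shows "0 \<le> excess h k ps" "b \<in> set ps \<Longrightarrow> h \<le> count_list ps a"
  using assms by (auto simp: balanced_def)

lemma balanced_shuffles_block:
  assumes "ds' \<in> shuffles ds (replicate h a @ replicate k b)" "balanced h k ds"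
  shows "balanced h k ds'"
  unfolding balanced_def
proof (intro allI impI)
  fix ps
  assume "prefix ps ds'"
  with assms(1) obtain xs ys where xs: "prefix xs ds" and ys: "prefix ys (replicate h a @ replicate k b)"
    and ps: "ps \<in> shuffles xs ys"
    by (rule prefix_in_shuffles)
  from ys obtain i j where ij: "ys = replicate i a @ replicate j b" "i \<le> h" "j \<le> k" "j = 0 \<or> i = h"
    by (rule prefix_replicate_append_replicate)
  have "0 \<le> excess h k ys"
  proof (cases "j = 0")
    case False
    then have "int h * int j \<le> int k * int i"
      using ij by (simp add: mult.commute mult_left_mono)
    then show ?thesis using ij(1) by simp
  qed (simp add: ij(1))
  moreover have "excess h k ps = excess h k xs + excess h k ys"
    and "count_list ps a = count_list xs a + count_list ys a"
    using count_list_shuffles[OF ps] by (simp_all add: excess_def algebra_simps)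
  moreover have "b \<in> set ps \<Longrightarrow> h \<le> count_list xs a \<or> h \<le> count_list ys a"
    using set_shuffles[OF ps] balancedD(2)[OF assms(2) xs] ij by auto
  ultimately show "0 \<le> excess h k ps \<and> (b \<in> set ps \<longrightarrow> h \<le> count_list ps a)"
    using balancedD(1)[OF assms(2) xs] by auto
qed

lemma L_eps_balanced:
  assumes "ds \<in> L_eps {replicate h a @ replicate k b}"
  shows "balanced h k ds"
  using assms unfolding L_eps_def ins_steps_def mem_Collect_eq
proof (induction rule: rtranclp_induct)
  case base
  show ?case by (simp add: balanced_def)
next
  case (step ds ds')
  then show ?case by (auto simp: ins_step_iff_shuffles intro: balanced_shuffles_block)
qed

section \<open>The words \<open>S\<^sub>n\<close>\<close>

definition motif :: "nat \<Rightarrow> nat \<Rightarrow> word" where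
  "motif h k = [a, b] @ replicate (h - 1) a @ replicate (k - 1) b"

definition motifs :: "nat \<Rightarrow> nat \<Rightarrow> nat \<Rightarrow> word" where
  "motifs h k n = concat (replicate n (motif h k))"

definition S_common :: "nat \<Rightarrow> nat \<Rightarrow> nat \<Rightarrow> word" where
  "S_common h k n = replicate (2*k - 1) b @ motifs h k n"

definition S_tail :: "nat \<Rightarrow> nat \<Rightarrow> nat \<Rightarrow> word" where
  "S_tail h k n = S_common h k n @ replicate (2*h) a @ replicate (3*k) b"

lemma motifs_Suc: "motifs h k (Suc n) = motif h k @ motifs h k n"
  by (simp add: motifs_def)

lemma motifs_add: "motifs h k (m + n) = motifs h k m @ motifs h k n"
  by (simp add: motifs_def replicate_add)

lemma count_list_motif:
  "1 \<le> h \<Longrightarrow> count_list (motif h k) a = h"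
  "1 \<le> k \<Longrightarrow> count_list (motif h k) b = k"
  by (simp_all add: motif_def)

lemma count_list_motifs:
  "1 \<le> h \<Longrightarrow> count_list (motifs h k n) a = n * h"
  "1 \<le> k \<Longrightarrow> count_list (motifs h k n) b = n * k"
  by (simp_all add: motifs_def count_list_motif)

lemma S_word_eq_blocks:
  "S_word h k n = replicate (3*h) a @ replicate (2*k) b @ motifs h k n @
     replicate (2*h) a @ replicate (3*k) b"
proof -
  have "replicate (3*h) a = replicate h a @ replicate (2*h) a"
    "replicate (3*k) b = replicate (2*k) b @ replicate k b"
    by (simp_all flip: replicate_add)
  then show ?thesis by (simp add: S_word_def motifs_def motif_def)
qed

lemma S_word_eq_S_tail:
  "1 \<le> k \<Longrightarrow> S_word h k n = replicate (3*h) a @ b # S_tail h k n"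
  by (cases k) (simp_all add: S_word_eq_blocks S_tail_def S_common_def)

lemma count_list_S_word_b: "1 \<le> k \<Longrightarrow> count_list (S_word h k n) b = n * k + 5 * k"
  by (simp add: S_word_eq_blocks count_list_motifs)

lemma S_tail_eq_S_common_Suc:
  assumes "i < j"
  obtains R where "S_tail h k j = S_common h k i @ a # b # R"
proof -
  have "motifs h k j = motifs h k i @ motif h k @ motifs h k (j - i - 1)"
    using assms motifs_add[of h k i "Suc (j - i - 1)"] by (simp add: motifs_Suc)
  then show thesis by (intro that) (simp add: S_tail_def S_common_def motif_def)
qed

lemma prefix_S_common_S_tail:
  assumes "1 \<le> k"
  shows "prefix (S_common h k n @ replicate (2*h) a @ [b]) (S_tail h k n)"
proof -
  have "replicate (3*k) b = b # replicate (3*k - 1) b"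
    using assms by (cases "3*k") simp_all
  then show ?thesis by (simp add: S_tail_def S_common_def prefix_def)
qed

lemma ins_steps_motif:
  assumes "1 \<le> h" "1 \<le> k"
  shows "ins_steps {replicate h a @ replicate k b} (replicate h a @ xs) (replicate h a @ motif h k @ xs)"
proof -
  have "replicate h a @ motif h k @ xs =
      replicate h a @ [a] @ [b] @ replicate (h - 1) a @ replicate (k - 1) b @ xs"
    by (simp add: motif_def)
  also have "\<dots> \<in> shuffles ([a] @ replicate (h - 1) a @ xs) (replicate h a @ [b] @ replicate (k - 1) b @ [])"
    by (intro append_in_shuffles_leftI append_in_shuffles_rightI) simp
  also have "\<dots> = shuffles (replicate h a @ xs) (replicate h a @ replicate k b)"
    using assms by (cases h; cases k) simp_all
  finally show ?thesis
    unfolding ins_steps_def ins_step_iff_shuffles by blast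
qed

lemma S_word_in_L_eps:
  assumes "1 \<le> h" "1 \<le> k"
  shows "S_word h k n \<in> L_eps {replicate h a @ replicate k b}"
proof -
  define A where "A = replicate h a"
  define B where "B = replicate k b"
  define R where "R = A @ A @ B @ B @ B"
  let ?I = "{A @ B}"
  have AB: "A @ B \<in> ?I" by simp
  have pump: "ins_steps ?I (A @ xs) (A @ motifs h k m @ xs)" for xs m
  proof (induction m)
    case 0
    then show ?case by (simp add: motifs_def ins_steps_def)
  next
    case (Suc m)
    note Suc.IH
    also have "ins_steps ?I (A @ motifs h k m @ xs) (A @ motifs h k (Suc m) @ xs)"
      using ins_steps_motif[OF assms, of "motifs h k m @ xs"] by (simp add: A_def B_def motifs_Suc)
    finally show ?case .
  qed
  have "ins_steps ?I [] (A @ B)"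
    using ins_steps_insert[OF AB, of "[]" "[]"] by simp
  also have "ins_steps ?I (A @ B) (A @ A @ B @ B)"
    using ins_steps_insert[OF AB, of A B] by simp
  also have "ins_steps ?I (A @ A @ B @ B) (A @ R)"
    using ins_steps_insert[OF AB, of "A @ A" "B @ B"] by (simp add: R_def)
  also have "ins_steps ?I (A @ R) (A @ motifs h k n @ R)"
    by (rule pump)
  also have "ins_steps ?I (A @ motifs h k n @ R) (A @ A @ B @ motifs h k n @ R)"
    using ins_steps_insert[OF AB, of A "motifs h k n @ R"] by simp
  also have "ins_steps ?I (A @ A @ B @ motifs h k n @ R) (A @ A @ A @ B @ B @ motifs h k n @ R)"
    using ins_steps_insert[OF AB, of "A @ A" "B @ motifs h k n @ R"] by simp
  also have "A @ A @ A @ B @ B @ motifs h k n @ R = S_word h k n"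
  proof -
    have "3*h = h + h + h" "2*h = h + h" "3*k = k + k + k" "2*k = k + k" by simp_all
    then show ?thesis
      by (simp only: S_word_eq_blocks A_def B_def R_def replicate_add append_assoc)
  qed
  finally show ?thesis by (simp add: L_eps_def A_def B_def)
qed

lemma excess_motifs: "1 \<le> h \<Longrightarrow> 1 \<le> k \<Longrightarrow> excess h k (motifs h k n) = 0"
  by (simp add: excess_def count_list_motifs)

lemma excess_prefix_motifs:
  assumes "1 \<le> h" "1 \<le> k" "prefix ps (motifs h k n)"
  shows "excess h k ps \<le> int h * int k"
  using assms(3)
proof (induction n arbitrary: ps)
  case 0
  then show ?case by (simp add: motifs_def)
next
  case (Suc n)
  then consider "prefix ps (motif h k)" | qs where "ps = motif h k @ qs" "prefix qs (motifs h k n)"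
    unfolding motifs_Suc prefix_append by blast
  then show ?case
  proof cases
    case 1
    then have "count_list ps a \<le> h"
      using count_list_motif(1)[OF assms(1)] by (metis count_list_append le_add1 prefix_def)
    then have "k * count_list ps a \<le> h * k"
      by (metis mult.commute mult_le_mono2)
    then have "int k * int (count_list ps a) \<le> int h * int k"
      by (simp flip: of_nat_mult)
    moreover have "0 \<le> int h * int (count_list ps b)" by simp
    ultimately show ?thesis unfolding excess_def by linarith
  next
    case 2
    moreover have "excess h k (motif h k) = 0"
      using excess_motifs[OF assms(1,2), of 1] by (simp add: motifs_def)
    ultimately show ?thesis using Suc.IH by simp
  qed
qed

lemma excess_replicate_append_replicate_ge:
  assumes "1 \<le> h" "1 \<le> k" "i \<le> m"
    and "int k * int m \<le> excess h k (replicate i a @ replicate j b)"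
  shows "i = m \<and> j = 0"
proof -
  have "int k * int i \<le> int k * int m" using assms(3) by (simp add: mult_left_mono)
  moreover have "excess h k (replicate i a @ replicate j b) = int k * int i - int h * int j"
    by simp
  moreover have "0 \<le> int h * int j" by simp
  ultimately have "int h * int j \<le> 0" and "int k * int m \<le> int k * int i"
    using assms(4) by linarith+
  then have "j = 0" and "m \<le> i" using assms(1,2) by (simp_all add: mult_le_0_iff)
  then show ?thesis using assms(3) by simp
qed

lemma prefix_S_word_excess_ge:
  assumes "1 \<le> h" "1 \<le> k" "prefix ps (S_word h k n)"
    and "3 * int h * int k \<le> excess h k ps"
  shows "ps = replicate (3*h) a \<or> S_word h k n = ps @ replicate (3*k) b"
proof -
  let ?head = "replicate (3*h) a @ replicate (2*k) b"
  let ?tail = "replicate (2*h) a @ replicate (3*k) b"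
  have S: "S_word h k n = ?head @ motifs h k n @ ?tail" by (simp add: S_word_eq_blocks)
  have head: "excess h k ?head = int h * int k" by (simp add: algebra_simps)
  from assms(3) consider (head) "prefix ps ?head"
    | (motifs) qs where "ps = ?head @ qs" "prefix qs (motifs h k n)"
    | (tail) rs where "ps = ?head @ motifs h k n @ rs" "prefix rs ?tail"
    unfolding S prefix_append by blast
  then show ?thesis
  proof cases
    case head
    then obtain i j where ij: "ps = replicate i a @ replicate j b" "i \<le> 3*h"
      by (rule prefix_replicate_append_replicate)
    then have "i = 3*h \<and> j = 0"
      using assms(4) by (intro excess_replicate_append_replicate_ge[OF assms(1,2)]) (simp_all add: algebra_simps)
    then show ?thesis using ij by simp
  next
    case (motifs qs)
    then have "excess h k ps \<le> 2 * int h * int k"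
      using head excess_prefix_motifs[OF assms(1,2) motifs(2)] by simp
    moreover have "0 < int h * int k" using assms(1,2) by simp
    ultimately show ?thesis using assms(4) by linarith
  next
    case (tail rs)
    from tail(2) obtain i j where ij: "rs = replicate i a @ replicate j b" "i \<le> 2*h"
      by (rule prefix_replicate_append_replicate)
    then have "i = 2*h \<and> j = 0"
      using assms(4) tail(1) head excess_motifs[OF assms(1,2)]
      by (intro excess_replicate_append_replicate_ge[OF assms(1,2)]) (simp_all add: algebra_simps)
    then show ?thesis using S tail(1) ij by simp
  qed
qed

lemma no_a_run_S_common:
  assumes "2 \<le> h" "2 \<le> k"
  shows "\<not> sublist (replicate h a) (S_common h k n @ [a])"
proof -
  have motif: "\<not> sublist (replicate h a) (motif h k)"
    unfolding motif_def using assms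
    by (intro not_sublist_replicate_append not_sublist_replicate_if_count_less) simp_all
  have runs: "\<not> sublist (replicate h a) (motifs h k n @ [a])"
  proof (induction n)
    case 0
    then show ?case using assms by (simp add: motifs_def not_sublist_replicate_if_count_less)
  next
    case (Suc n)
    have "last (motif h k) = b" using assms by (simp add: motif_def)
    then show ?case
      unfolding motifs_Suc append_assoc
      by (intro not_sublist_replicate_append[OF motif Suc.IH]) simp
  qed
  have "\<not> sublist (replicate h a) (replicate (2*k - 1) b)"
    using assms(1) by (simp add: not_sublist_replicate_if_count_less)
  then show ?thesis
    unfolding S_common_def append_assoc
    by (rule not_sublist_replicate_append[OF _ runs]) (use assms(2) in simp)
qed

lemma shuffles_a_run_not_prefix_S_common:
  assumes "2 \<le> h" "2 \<le> k" "h \<le> d"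
    and "zs \<in> shuffles xs (replicate d a)" "prefix xs (S_tail h k i)"
  shows "\<not> prefix zs (S_common h k i @ [a])"
proof
  assume zs: "prefix zs (S_common h k i @ [a])"
  have "prefix (S_common h k i @ [a]) (S_tail h k i)"
    using prefix_S_common_S_tail[of k h i] assms(1,2)
    by (cases h) (auto elim: prefix_order.trans[rotated])
  then have "prefix zs (S_tail h k i)" using zs prefix_order.trans by blast
  then have "zs = xs @ replicate d a"
    using shuffles_replicate_common_prefix[OF assms(4) _ assms(5)] by blast
  then have "sublist (replicate h a) (S_common h k i @ [a])"
    using zs assms(3) by (metis le_add_diff_inverse prefix_imp_sublist replicate_add
        sublist_appendI sublist_order.order_trans)
  then show False using no_a_run_S_common[OF assms(1,2)] by blast
qed

lemma shuffles_a_run_not_beyond_S_common: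
  assumes "1 \<le> h" "1 \<le> k" "i < j"
    and "zs \<in> shuffles xs (replicate d a)" "prefix xs (S_tail h k i)" "prefix zs (S_tail h k j)"
  shows "\<not> prefix (S_common h k i @ [a, b]) zs"
proof
  let ?C = "S_common h k i"
  assume C_zs: "prefix (?C @ [a, b]) zs"
  obtain R where j_eq: "S_tail h k j = (?C @ [a]) @ b # R"
    using S_tail_eq_S_common_Suc[OF assms(3)] by auto
  have prefix_i: "prefix (?C @ replicate (2*h) a @ [b]) (S_tail h k i)"
    using assms(2) by (rule prefix_S_common_S_tail)
  have "count_list (?C @ replicate (2*h) a @ [b]) b \<le> count_list xs b"
    using C_zs count_list_shuffles[OF assms(4), of b] by (auto simp: prefix_def)
  then have "prefix (?C @ replicate (2*h) a @ [b]) xs"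
    by (intro prefix_by_count_last[OF prefix_i assms(5), where c = b]) simp_all
  then obtain M where xs_eq: "xs = (?C @ replicate (2*h) a) @ b # M" by (auto simp: prefix_def)
  from assms(4)[unfolded xs_eq] obtain Q1 Q2 where Q: "zs = Q1 @ b # Q2"
    and count_b: "count_list Q1 b = count_list (?C @ replicate (2*h) a) b"
    and count_le: "\<And>y. count_list (?C @ replicate (2*h) a) y \<le> count_list Q1 y"
    by (rule shuffles_split_left_count) auto
  from count_b count_le[of a] have count_Q1: "count_list Q1 b = count_list (?C @ [a]) b"
    "count_list (?C @ replicate (2*h) a) a \<le> count_list Q1 a"
    by simp_all
  from assms(6) obtain T where "S_tail h k j = zs @ T" by (auto simp: prefix_def)
  then have "Q1 @ b # (Q2 @ T) = (?C @ [a]) @ b # R" using Q j_eq by simp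
  then have "Q1 = ?C @ [a]" using count_Q1(1) by (rule append_Cons_eq_by_count)
  then show False using count_Q1(2) assms(1) by simp
qed

lemma S_tail_not_in_shuffles:
  assumes "2 \<le> h" "2 \<le> k" "i < j" "h \<le> d"
  shows "S_tail h k j \<notin> shuffles (S_tail h k i) (replicate d a @ b # ds)"
proof
  let ?C = "S_common h k i"
  assume "S_tail h k j \<in> shuffles (S_tail h k i) (replicate d a @ b # ds)"
  then obtain zs zs' xs xs' where zs: "S_tail h k j = zs @ b # zs'" and xs: "S_tail h k i = xs @ xs'"
    and zs_xs: "zs \<in> shuffles xs (replicate d a)"
    by (rule shuffles_split_right)
  obtain R where R: "S_tail h k j = (?C @ [a]) @ b # R"
    using S_tail_eq_S_common_Suc[OF assms(3)] by auto
  have "prefix (zs @ [b]) (S_tail h k j)" by (simp add: zs prefix_def)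
  moreover have "prefix ((?C @ [a]) @ [b]) (S_tail h k j)" by (simp add: R prefix_def)
  ultimately have "prefix (zs @ [b]) ((?C @ [a]) @ [b]) \<or> prefix ((?C @ [a]) @ [b]) (zs @ [b])"
    by (rule prefix_same_cases)
  then have "prefix zs (?C @ [a]) \<or> prefix ((?C @ [a]) @ [b]) zs"
    by (auto simp del: append_assoc dest: append_prefixD)
  moreover have "prefix xs (S_tail h k i)" "prefix zs (S_tail h k j)"
    using xs zs by (simp_all add: prefix_def)
  ultimately show False
    using shuffles_a_run_not_prefix_S_common[OF assms(1,2,4) zs_xs]
      shuffles_a_run_not_beyond_S_common[of h k i j zs xs d] assms zs_xs by auto
qed

lemma S_word_shuffles_imp_S_tail_shuffles:
  assumes "1 \<le> h" "1 \<le> k" "S_word h k j \<in> shuffles (S_word h k i) ds" "balanced h k ds"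
  shows "S_tail h k j \<in> shuffles (S_tail h k i) ds"
proof -
  from assms(3)[unfolded S_word_eq_S_tail[OF assms(2), of h i]]
  obtain X1 X2 D1 D2 where X: "S_word h k j = X1 @ b # X2" "ds = D1 @ D2"
    and X1: "X1 \<in> shuffles (replicate (3*h) a) D1" and X2: "X2 \<in> shuffles (S_tail h k i) D2"
    by (rule shuffles_split_left)
  have "0 \<le> excess h k D1" using balancedD(1)[OF assms(4)] X(2) by (simp add: prefix_def)
  then have "3 * int h * int k \<le> excess h k X1"
    using count_list_shuffles[OF X1] by (simp add: excess_def algebra_simps)
  moreover have "prefix X1 (S_word h k j)" using X(1) by (simp add: prefix_def)
  ultimately consider "X1 = replicate (3*h) a" | "S_word h k j = X1 @ replicate (3*k) b"
    using prefix_S_word_excess_ge[OF assms(1,2)] by blast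
  then show ?thesis
  proof cases
    case 1
    then have "D1 = []" using length_shuffles[OF X1] by simp
    moreover have "X2 = S_tail h k j" using X(1) 1 S_word_eq_S_tail[OF assms(2)] by simp
    ultimately show ?thesis using X(2) X2 by simp
  next
    case 2
    then have "X2 = replicate (3*k - 1) b" using X(1) assms(2) by (cases "3*k") simp_all
    then show ?thesis
      using count_list_shuffles[OF X2, of b] assms(2)
      by (simp add: S_tail_def S_common_def count_list_motifs)
  qed
qed

lemma S_word_not_ins_steps:
  assumes "2 \<le> h" "2 \<le> k" "i < j"
  shows "\<not> ins_steps {replicate h a @ replicate k b} (S_word h k i) (S_word h k j)"
proof
  assume "ins_steps {replicate h a @ replicate k b} (S_word h k i) (S_word h k j)"
  then obtain ds where sh: "S_word h k j \<in> shuffles (S_word h k i) ds" and bal: "balanced h k ds"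
    by (blast elim: ins_steps_imp_shuffles_L_eps dest: L_eps_balanced)
  have "count_list (S_word h k i) b < count_list (S_word h k j) b"
    using assms(2,3) by (simp add: count_list_S_word_b)
  then have "b \<in> set ds"
    using count_list_shuffles[OF sh, of b] count_list_0_iff[of ds b] by simp
  then obtain us ds' where ds: "ds = us @ b # ds'" "b \<notin> set us"
    using split_list_first by metis
  have "h \<le> length us"
    using balancedD(2)[OF bal, of "us @ [b]"] ds length_eq_count_list_a_b[of us]
    by (simp add: prefix_def count_list_0_iff)
  moreover have "S_tail h k j \<in> shuffles (S_tail h k i) (replicate (length us) a @ b # ds')"
    using S_word_shuffles_imp_S_tail_shuffles[OF _ _ sh bal] assms(1,2) ds
      replicate_a_if_b_notin[OF ds(2)] by simp
  ultimately show False using S_tail_not_in_shuffles[OF assms] by blast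
qed

theorem proposition1:
  fixes h k :: nat
  assumes "h \<ge> 2" and "k \<ge> 2"
  defines "w \<equiv> replicate h a @ replicate k b"
  shows "(\<forall>n\<ge>1. S_word h k n \<in> L_eps {w})
    \<and> (\<forall>i j. 1 \<le> i \<and> i < j \<longrightarrow> \<not> ins_steps {w} (S_word h k i) (S_word h k j))
    \<and> \<not> wqo_on (ins_steps {w}) (L_eps {w})"
proof (intro conjI)
  show members: "\<forall>n\<ge>1. S_word h k n \<in> L_eps {w}"
    using S_word_in_L_eps assms unfolding w_def by simp
  show antichain: "\<forall>i j. 1 \<le> i \<and> i < j \<longrightarrow> \<not> ins_steps {w} (S_word h k i) (S_word h k j)"
    using S_word_not_ins_steps assms unfolding w_def by blast
  show "\<not> wqo_on (ins_steps {w}) (L_eps {w})"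
    unfolding wqo_on_def
  proof
    assume wqo: "\<forall>s :: nat \<Rightarrow> word. (\<forall>n. s n \<in> L_eps {w}) \<longrightarrow> (\<exists>i j. i < j \<and> ins_steps {w} (s i) (s j))"
    have "\<forall>n. S_word h k (Suc n) \<in> L_eps {w}" using members by simp
    then obtain i j where "i < j" "ins_steps {w} (S_word h k (Suc i)) (S_word h k (Suc j))"
      using wqo[rule_format, of "\<lambda>n. S_word h k (Suc n)"] by blast
    then show False using antichain by simp
  qed
qed

end
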